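(* For every $n\ge3$ and $d=\binom n2$ there is a $d$-dimensional $0/1$-polytope in $\mathbb{R}^d$ that is $3$-neighborly (every three distinct vertices span a triangular face) and has more than $2^{\sqrt{2d}-1/2}$ vertices.
   Context: A $0/1$-polytope is the convex hull of a subset of $\{0,1\}^d$. *)

theory Defs
  imports "HOL-Analysis.Analysis"
begin

definition zero_one_points :: "(real^'d) set" where
  "zero_one_points = {x. \<forall>i. x $ i = 0 \<or> x $ i = 1}"

definition zero_one_polytope :: "(real^'d) set \<Rightarrow> bool" where
  "zero_one_polytope P \<longleftrightarrow> (\<exists>V. V \<subseteq> zero_one_points \<and> P = convex hull V)"

definition vertices_of :: "'a::real_vector set \<Rightarrow> 'a set" where
  "vertices_of P = {v. v extreme_point_of P}"

definition three_neighborly :: "'a::real_vector set \<Rightarrow> bool" where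
  "three_neighborly P \<longleftrightarrow>
     (\<forall>u v w. u \<in> vertices_of P \<and> v \<in> vertices_of P \<and> w \<in> vertices_of P \<and>
        u \<noteq> v \<and> u \<noteq> w \<and> v \<noteq> w \<longrightarrow> convex hull {u, v, w} face_of P)"

end

theory Submission
  imports Defs
begin

text \<open>The polytope is the cut polytope of \<open>K\<^sub>n\<close>. Coordinates are indexed by the \<open>d\<close> edges
of \<open>K\<^sub>n\<close>, and the vertices are the cut vectors \<open>\<delta>(S)\<close> for \<open>S \<subseteq> {1, \<dots>, n - 1}\<close> (the shore
avoiding vertex 0): \<open>2\<^sup>n\<^sup>-\<^sup>1\<close> distinct 0/1-points. Writing \<open>star i\<close> for a shore of the cut
isolating vertex \<open>i\<close>, \<open>e\<^sub>i\<^sub>j = (\<delta>(star i) + \<delta>(star j) - \<delta>(star i \<triangle> star j)) / 2\<close>, so the cut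
vectors span and the polytope is full-dimensional. For 3-neighborliness fix a cut \<open>D\<close> and a
triangle \<open>ijk\<close> and take the switching functional \<open>\<Sum>\<^sub>e (1 - 2 \<delta>(D)\<^sub>e) x\<^sub>e\<close> over the three
triangle edges: its value at \<open>\<delta>(S)\<close> exceeds that at \<open>\<delta>(D)\<close> by the number of triangle edges cut
by \<open>S \<triangle> D\<close>, which is 0 or 2. For distinct cuts \<open>A, B, C, D\<close> some triangle is split by each of
\<open>A \<triangle> D\<close>, \<open>B \<triangle> D\<close>, \<open>C \<triangle> D\<close>, so this functional is maximal at \<open>\<delta>(A), \<delta>(B), \<delta>(C)\<close> but not
at \<open>\<delta>(D)\<close>; summing these functionals over all \<open>D\<close> exposes the triangle as a face. Finally
\<open>2d = n(n - 1) < (n - 1/2)\<^sup>2\<close>.\<close>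

lemma face_of_convex_hull_separated:
  fixes U V :: "'a::euclidean_space set"
  assumes "finite V" and "U \<subseteq> V"
    and sep: "\<And>x. x \<in> V - U \<Longrightarrow>
      \<exists>a b. (\<forall>v\<in>V. a \<bullet> v \<le> b) \<and> (\<forall>u\<in>U. a \<bullet> u = b) \<and> a \<bullet> x < b"
  shows "convex hull U face_of convex hull V"
proof -
  obtain A B where AB: "\<And>x. x \<in> V - U \<Longrightarrow>
      (\<forall>v\<in>V. A x \<bullet> v \<le> B x) \<and> (\<forall>u\<in>U. A x \<bullet> u = B x) \<and> A x \<bullet> x < B x"
    using sep by metis
  define a where "a = (\<Sum>x\<in>V - U. A x)"
  define b where "b = (\<Sum>x\<in>V - U. B x)"
  have a_inner: "a \<bullet> y = (\<Sum>x\<in>V - U. A x \<bullet> y)" for y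
    unfolding a_def by (simp add: inner_sum_left)
  have on_U: "a \<bullet> u = b" if "u \<in> U" for u
    using AB that unfolding a_inner b_def by (auto intro: sum.cong)
  have below: "a \<bullet> y < b" if "y \<in> V - U" for y
    unfolding a_inner b_def
    by (rule sum_strict_mono_ex1) (use \<open>finite V\<close> AB that in auto)
  have "affine hull U \<subseteq> {y. a \<bullet> y = b}"
    by (rule hull_minimal) (use on_U affine_hyperplane in auto)
  moreover have "convex hull (V - U) \<subseteq> {y. a \<bullet> y < b}"
    by (rule hull_minimal) (use below convex_halfspace_lt in auto)
  ultimately have "affine hull U \<inter> convex hull (V - U) = {}"
    by fastforce
  then show ?thesis
    using face_of_convex_hulls \<open>finite V\<close> \<open>U \<subseteq> V\<close> by blast
qed

lemma finite_zero_one_points: "finite (zero_one_points :: (real^'d) set)"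
proof -
  have "zero_one_points \<subseteq> range (\<lambda>S. \<chi> i. of_bool (i \<in> S) :: (real^'d))"
  proof
    fix x :: "real^'d"
    assume "x \<in> zero_one_points"
    then have "x = (\<chi> i. of_bool (i \<in> {i. x $ i = 1}))"
      by (auto simp: zero_one_points_def vec_eq_iff)
    then show "x \<in> range (\<lambda>S. \<chi> i. of_bool (i \<in> S))"
      by blast
  qed
  then show ?thesis
    by (rule finite_subset) simp
qed

lemma extreme_point_of_convex_hull_zero_one:
  fixes V :: "(real^'d) set"
  assumes V: "V \<subseteq> zero_one_points" and "v \<in> V"
  shows "v extreme_point_of convex hull V"
proof -
  define a :: "real^'d" where "a = (\<chi> k. 2 * v $ k - 1)"
  have coord: "a $ k * x $ k \<le> a $ k * v $ k \<and> (x $ k \<noteq> v $ k \<longrightarrow> a $ k * x $ k < a $ k * v $ k)"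
    if "x \<in> V" for x k
  proof -
    have "x $ k = 0 \<or> x $ k = 1" "v $ k = 0 \<or> v $ k = 1"
      using V that \<open>v \<in> V\<close> unfolding zero_one_points_def by auto
    then show ?thesis
      unfolding a_def by auto
  qed
  have "convex hull {v} face_of convex hull V"
  proof (rule face_of_convex_hull_separated)
    show "finite V"
      using V finite_zero_one_points by (rule finite_subset)
    fix x
    assume x: "x \<in> V - {v}"
    then obtain k where k: "x $ k \<noteq> v $ k"
      by (metis DiffE singletonI vec_eq_iff)
    have "a \<bullet> x < a \<bullet> v"
      unfolding inner_vec_def by (rule sum_strict_mono_ex1) (use coord x k in auto)
    moreover have "a \<bullet> y \<le> a \<bullet> v" if "y \<in> V" for y
      unfolding inner_vec_def by (rule sum_mono) (use coord that in auto)
    ultimately show "\<exists>a b. (\<forall>y\<in>V. a \<bullet> y \<le> b) \<and> (\<forall>u\<in>{v}. a \<bullet> u = b) \<and> a \<bullet> x < b"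
      by blast
  qed (use \<open>v \<in> V\<close> in auto)
  then show ?thesis
    by (simp add: face_of_singleton)
qed

lemma vertices_of_convex_hull_zero_one:
  fixes V :: "(real^'d) set"
  assumes "V \<subseteq> zero_one_points"
  shows "vertices_of (convex hull V) = V"
  unfolding vertices_of_def
  using extreme_point_of_convex_hull extreme_point_of_convex_hull_zero_one[OF assms] by blast

definition splits :: "'a set \<Rightarrow> 'a set \<Rightarrow> bool" where
  "splits S A \<longleftrightarrow> A \<inter> S \<noteq> {} \<and> \<not> A \<subseteq> S"

lemma splits_doubleton [simp]: "splits S {i, j} \<longleftrightarrow> (i \<in> S) \<noteq> (j \<in> S)"
  unfolding splits_def by auto

lemma splits_triangle_count:
  "of_bool (splits Z {i, j}) + of_bool (splits Z {i, k}) + of_bool (splits Z {j, k}) =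
     (if splits Z {i, j, k} then 2 else (0 :: 'a::semiring_1))"
  unfolding splits_def by (cases "i \<in> Z"; cases "j \<in> Z"; cases "k \<in> Z") auto

lemma splits_triangle_with_zero:
  assumes "0 \<notin> X" and "j \<in> X \<or> k \<in> X"
  shows "splits X {0 :: nat, j, k}"
  using assms unfolding splits_def by auto

lemma exists_triangle_split_by_three_sharing:
  fixes X Y Z :: "nat set"
  assumes "n \<ge> 3" and "X \<subseteq> {1..<n}" "Y \<subseteq> {1..<n}" "Z \<subseteq> {1..<n}" "Z \<noteq> {}"
    and "m \<in> X" "m \<in> Y"
  obtains i j k where "distinct [i, j, k]" "i < n" "j < n" "k < n"
    "splits X {i, j, k}" "splits Y {i, j, k}" "splits Z {i, j, k}"
proof -
  obtain z where "z \<in> Z"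
    using assms by blast
  have "(if m = 1 then 2 else 1) \<in> {1..<n} - {m}"
    using \<open>n \<ge> 3\<close> by auto
  then obtain m' where "m' \<in> {1..<n} - {m}" ..
  show ?thesis
  proof (cases "z = m")
    case False
    show ?thesis
      by (rule that[of 0 m z]) (use False assms \<open>z \<in> Z\<close> in \<open>auto intro!: splits_triangle_with_zero\<close>)
  next
    case True
    show ?thesis
      by (rule that[of 0 m m']) (use True assms \<open>z \<in> Z\<close> \<open>m' \<in> _\<close> in \<open>auto intro!: splits_triangle_with_zero\<close>)
  qed
qed

lemma exists_triangle_split_by_three:
  fixes X Y Z :: "nat set"
  assumes "n \<ge> 3" and X: "X \<subseteq> {1..<n}" "X \<noteq> {}" and Y: "Y \<subseteq> {1..<n}" "Y \<noteq> {}"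
    and Z: "Z \<subseteq> {1..<n}" "Z \<noteq> {}"
  obtains i j k where "distinct [i, j, k]" "i < n" "j < n" "k < n"
    "splits X {i, j, k}" "splits Y {i, j, k}" "splits Z {i, j, k}"
proof -
  consider m where "m \<in> X" "m \<in> Y" | m where "m \<in> X" "m \<in> Z" | m where "m \<in> Y" "m \<in> Z"
    | "X \<inter> Y = {}" "X \<inter> Z = {}" "Y \<inter> Z = {}"
    by blast
  then show ?thesis
  proof cases
    case 1
    then show ?thesis
      using exists_triangle_split_by_three_sharing[OF \<open>n \<ge> 3\<close> X(1) Y(1) Z] that by blast
  next
    case 2
    then show ?thesis
      using exists_triangle_split_by_three_sharing[OF \<open>n \<ge> 3\<close> X(1) Z(1) Y] that by blast
  next
    case 3
    then show ?thesis
      using exists_triangle_split_by_three_sharing[OF \<open>n \<ge> 3\<close> Y(1) Z(1) X] that by blast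
  next
    case 4
    obtain x y z where "x \<in> X" "y \<in> Y" "z \<in> Z"
      using X Y Z by blast
    then show ?thesis
      using 4 X Y Z by (intro that[of x y z]) (auto simp: splits_def)
  qed
qed

locale complete_graph_coordinates =
  fixes n :: nat and g :: "'d::finite \<Rightarrow> nat set"
  assumes bij_g: "bij_betw g UNIV {e. e \<subseteq> {..<n} \<and> card e = 2}"
begin

definition cut_vector :: "nat set \<Rightarrow> real^'d" where
  "cut_vector S = (\<chi> e. of_bool (splits S (g e)))"

definition edge_coord :: "nat \<Rightarrow> nat \<Rightarrow> 'd" where
  "edge_coord i j = inv_into UNIV g {i, j}"

lemma edge_endpointsE:
  obtains i j where "g e = {i, j}" "i \<noteq> j" "i < n" "j < n"
proof -
  have "g e \<subseteq> {..<n}" "card (g e) = 2"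
    using bij_g by (auto simp: bij_betw_def)
  then show ?thesis
    using that by (auto simp: card_2_iff)
qed

lemma g_edge_coord:
  assumes "i \<noteq> j" "i < n" "j < n"
  shows "g (edge_coord i j) = {i, j}"
proof -
  have "{i, j} \<in> range g"
    using assms bij_g by (auto simp: bij_betw_def)
  then show ?thesis
    unfolding edge_coord_def by (rule f_inv_into_f)
qed

lemma cut_vector_edge_coord [simp]:
  assumes "i \<noteq> j" "i < n" "j < n"
  shows "cut_vector S $ edge_coord i j = of_bool ((i \<in> S) \<noteq> (j \<in> S))"
  unfolding cut_vector_def using g_edge_coord[OF assms] by simp

lemma splits_symdiff_edge:
  "splits (sym_diff X Y) (g e) \<longleftrightarrow> splits X (g e) \<noteq> splits Y (g e)"
  by (rule edge_endpointsE[of e]) auto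

lemma cut_vector_zero_one: "cut_vector S \<in> zero_one_points"
  unfolding cut_vector_def zero_one_points_def by simp

lemma inj_on_cut_vector: "inj_on cut_vector (Pow {1..<n})"
proof (rule inj_onI)
  fix S T
  assume S: "S \<in> Pow {1..<n}" and T: "T \<in> Pow {1..<n}" and eq: "cut_vector S = cut_vector T"
  have "0 \<notin> S" "0 \<notin> T"
    using S T by auto
  have "x \<in> S \<longleftrightarrow> x \<in> T" if "x \<in> {1..<n}" for x
    using arg_cong[OF eq, of "\<lambda>v. v $ edge_coord 0 x"] \<open>0 \<notin> S\<close> \<open>0 \<notin> T\<close> that by auto
  then show "S = T"
    using S T by blast
qed

lemma card_cut_vectors: "card (cut_vector ` Pow {1..<n}) = 2 ^ (n - 1)"
  using card_image[OF inj_on_cut_vector] by (simp add: card_Pow)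

lemma axis_in_span_cut_vectors: "axis e 1 \<in> span (cut_vector ` Pow {1..<n})"
proof -
  obtain i j where e: "g e = {i, j}" "i \<noteq> j" "i < n" "j < n"
    by (rule edge_endpointsE)
  \<comment> \<open>\<open>{0}\<close> is not an admissible shore, so vertex 0 is isolated by its complement\<close>
  define star where "star v = (if v = 0 then {1..<n} else {v})" for v
  have star: "star v \<in> Pow {1..<n}" if "v < n" for v
    using that unfolding star_def by auto
  have splits_star: "splits (star v) (g e') \<longleftrightarrow> v \<in> g e'" if "v < n" for v e'
  proof -
    obtain a b where "g e' = {a, b}" "a \<noteq> b" "a < n" "b < n"
      by (rule edge_endpointsE)
    then show ?thesis
      using that unfolding star_def by (cases "a = v"; cases "b = v"; cases "v = 0") auto
  qed
  have same_edge: "i \<in> g e' \<and> j \<in> g e' \<longleftrightarrow> e' = e" for e'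
  proof -
    have "i \<in> g e' \<and> j \<in> g e' \<longleftrightarrow> g e' = g e"
      by (rule edge_endpointsE[of e']) (use e in auto)
    then show ?thesis
      using bij_betw_imp_inj_on[OF bij_g] by (auto dest: injD)
  qed
  have "(cut_vector (star i) + cut_vector (star j) - cut_vector (sym_diff (star i) (star j))) $ e'
      = 2 * of_bool (i \<in> g e' \<and> j \<in> g e')" for e'
    using e by (cases "i \<in> g e'"; cases "j \<in> g e'")
      (simp_all add: cut_vector_def splits_symdiff_edge splits_star)
  then have "axis e 1 =
      (1/2) *\<^sub>R (cut_vector (star i) + cut_vector (star j) - cut_vector (sym_diff (star i) (star j)))"
    by (simp add: vec_eq_iff axis_def same_edge)
  also have "\<dots> \<in> span (cut_vector ` Pow {1..<n})"
    using star e by (intro span_mul span_diff span_add span_base) auto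
  finally show ?thesis .
qed

lemma span_cut_vectors: "span (cut_vector ` Pow {1..<n}) = UNIV"
proof -
  have "Basis \<subseteq> span (cut_vector ` Pow {1..<n})"
    using axis_in_span_cut_vectors by (auto simp: Basis_vec_def)
  then show ?thesis
    by (metis span_Basis span_mono span_span top.extremum_uniqueI)
qed

lemma aff_dim_cut_polytope: "aff_dim (convex hull (cut_vector ` Pow {1..<n})) = CARD('d)"
proof -
  have "cut_vector {} = 0"
    by (simp add: cut_vector_def splits_def vec_eq_iff)
  then have "0 \<in> affine hull (cut_vector ` Pow {1..<n})"
    by (metis Pow_bottom hull_inc image_eqI)
  then have "affine hull (cut_vector ` Pow {1..<n}) = UNIV"
    by (metis affine_hull_span_0 span_cut_vectors)
  then show ?thesis
    by (metis aff_dim_UNIV aff_dim_affine_hull aff_dim_convex_hull DIM_cart DIM_real mult_1_right)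
qed

definition triangle_functional :: "nat set \<Rightarrow> nat \<Rightarrow> nat \<Rightarrow> nat \<Rightarrow> real^'d" where
  "triangle_functional D i j k =
     (\<Sum>e\<in>{edge_coord i j, edge_coord i k, edge_coord j k}. (1 - 2 * cut_vector D $ e) *\<^sub>R axis e 1)"

lemma triangle_functional_cut_vector:
  assumes "distinct [i, j, k]" "i < n" "j < n" "k < n"
  shows "triangle_functional D i j k \<bullet> cut_vector S =
    triangle_functional D i j k \<bullet> cut_vector D + (if splits (sym_diff S D) {i, j, k} then 2 else 0)"
proof -
  let ?T = "{edge_coord i j, edge_coord i k, edge_coord j k}"
  have switch: "(1 - 2 * cut_vector D $ e) * (cut_vector S $ e - cut_vector D $ e) =
      cut_vector (sym_diff S D) $ e" for e
    by (cases "splits S (g e)"; cases "splits D (g e)") (simp_all add: cut_vector_def splits_symdiff_edge)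
  have "edge_coord i j \<noteq> edge_coord i k" "edge_coord i j \<noteq> edge_coord j k" "edge_coord i k \<noteq> edge_coord j k"
    using assms g_edge_coord by (metis distinct_length_2_or_more doubleton_eq_iff)+
  then have "triangle_functional D i j k \<bullet> (cut_vector S - cut_vector D) =
      (\<Sum>e\<in>?T. cut_vector (sym_diff S D) $ e)"
    by (simp add: triangle_functional_def inner_sum_left inner_axis' switch[symmetric] algebra_simps)
  also have "\<dots> = (if splits (sym_diff S D) {i, j, k} then 2 else 0)"
    using assms \<open>edge_coord i j \<noteq> edge_coord i k\<close> \<open>edge_coord i j \<noteq> edge_coord j k\<close>
      \<open>edge_coord i k \<noteq> edge_coord j k\<close>
    by (simp add: splits_triangle_count[symmetric] add.assoc)
  finally show ?thesis
    by (simp add: inner_diff_right)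
qed

lemma three_neighborly_cut_polytope:
  assumes "n \<ge> 3"
  shows "three_neighborly (convex hull (cut_vector ` Pow {1..<n}))"
proof -
  let ?V = "cut_vector ` Pow {1..<n}"
  have face: "convex hull {cut_vector A, cut_vector B, cut_vector C} face_of convex hull ?V"
    if ABC: "A \<in> Pow {1..<n}" "B \<in> Pow {1..<n}" "C \<in> Pow {1..<n}" for A B C
  proof (rule face_of_convex_hull_separated)
    show "finite ?V" "{cut_vector A, cut_vector B, cut_vector C} \<subseteq> ?V"
      using ABC by auto
    fix x
    assume "x \<in> ?V - {cut_vector A, cut_vector B, cut_vector C}"
    then obtain D where D: "D \<in> Pow {1..<n}" "x = cut_vector D" "D \<noteq> A" "D \<noteq> B" "D \<noteq> C"
      by blast
    have "sym_diff Q D \<subseteq> {1..<n}" "sym_diff Q D \<noteq> {}" if "Q \<in> Pow {1..<n}" "Q \<noteq> D" for Q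
      using that D(1) by auto
    then obtain i j k where ijk: "distinct [i, j, k]" "i < n" "j < n" "k < n"
      and splits: "splits (sym_diff A D) {i, j, k}" "splits (sym_diff B D) {i, j, k}"
        "splits (sym_diff C D) {i, j, k}"
      using exists_triangle_split_by_three[OF assms] ABC D by metis
    define f where "f = triangle_functional D i j k"
    have f_cut_vector: "f \<bullet> cut_vector S = f \<bullet> cut_vector D + (if splits (sym_diff S D) {i, j, k} then 2 else 0)"
      for S
      unfolding f_def by (rule triangle_functional_cut_vector[OF ijk])
    have "f \<bullet> v \<le> f \<bullet> cut_vector D + 2" if v: "v \<in> ?V" for v
    proof -
      obtain S where "v = cut_vector S"
        using v by blast
      then show ?thesis
        using f_cut_vector[of S] by simp
    qed
    moreover have "f \<bullet> u = f \<bullet> cut_vector D + 2" if "u \<in> {cut_vector A, cut_vector B, cut_vector C}" for u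
      using that f_cut_vector[of A] f_cut_vector[of B] f_cut_vector[of C] splits by auto
    moreover have "f \<bullet> x < f \<bullet> cut_vector D + 2"
      using D(2) by simp
    ultimately show "\<exists>a b. (\<forall>v\<in>?V. a \<bullet> v \<le> b) \<and>
        (\<forall>u\<in>{cut_vector A, cut_vector B, cut_vector C}. a \<bullet> u = b) \<and> a \<bullet> x < b"
      by blast
  qed
  have "?V \<subseteq> zero_one_points"
    using cut_vector_zero_one by blast
  then show ?thesis
    unfolding three_neighborly_def vertices_of_convex_hull_zero_one[OF \<open>?V \<subseteq> zero_one_points\<close>]
    using face by blast
qed

end

lemma two_powr_sqrt_less:
  assumes "n \<ge> 1"
  shows "2 powr (sqrt (2 * real (n choose 2)) - 1/2) < 2 ^ (n - 1)"
proof -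
  have "2 * (n choose 2) = n * (n - 1)"
    unfolding choose_two by (cases n) auto
  then have "2 * real (n choose 2) = real n * (real n - 1)"
    using assms by (metis of_nat_1 of_nat_diff of_nat_mult of_nat_numeral)
  also have "\<dots> < (real n - 1/2)\<^sup>2"
    by (simp add: power2_eq_square algebra_simps)
  finally have "sqrt (2 * real (n choose 2)) < real n - 1/2"
    using assms by (intro real_less_lsqrt) auto
  then have "2 powr (sqrt (2 * real (n choose 2)) - 1/2) < 2 powr real (n - 1)"
    using assms by (intro powr_less_mono) auto
  then show ?thesis
    by (simp add: powr_realpow)
qed

theorem mainTheorem14:
  fixes n :: nat
  assumes "n \<ge> 3" and "CARD('d::finite) = n choose 2"
  shows "\<exists>P :: (real^'d) set. zero_one_polytope P \<and> aff_dim P = int CARD('d) \<and>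
           three_neighborly P \<and>
           real (card (vertices_of P)) > 2 powr (sqrt (2 * real CARD('d)) - 1/2)"
proof -
  let ?E = "{e. e \<subseteq> {..<n} \<and> card e = 2}"
  have "finite ?E" "card ?E = CARD('d)"
    using n_subsets[of "{..<n}" 2] assms(2) by simp_all
  then obtain g :: "'d \<Rightarrow> nat set" where "bij_betw g UNIV ?E"
    using finite_same_card_bij[of "UNIV :: 'd set" ?E] by auto
  then interpret complete_graph_coordinates n g
    by unfold_locales
  let ?V = "cut_vector ` Pow {1..<n}"
  have "?V \<subseteq> zero_one_points"
    using cut_vector_zero_one by blast
  then have card: "card (vertices_of (convex hull ?V)) = 2 ^ (n - 1)"
    using card_cut_vectors by (simp add: vertices_of_convex_hull_zero_one)
  show ?thesis
  proof (intro exI conjI)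
    show "zero_one_polytope (convex hull ?V)"
      unfolding zero_one_polytope_def using \<open>?V \<subseteq> zero_one_points\<close> by blast
    show "aff_dim (convex hull ?V) = int CARD('d)"
      by (rule aff_dim_cut_polytope)
    show "three_neighborly (convex hull ?V)"
      using assms(1) by (rule three_neighborly_cut_polytope)
    show "real (card (vertices_of (convex hull ?V))) > 2 powr (sqrt (2 * real CARD('d)) - 1/2)"
      using card assms two_powr_sqrt_less[of n] by simp
  qed
qed

end
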